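(* Let $\mathbb X,\mathbb Y,\mathbb X^\sharp,\mathbb Y^\sharp$ be sets, $c:\mathbb X\times\mathbb X^\sharp\to\overline{\mathbb R}$, $d:\mathbb Y\times\mathbb Y^\sharp\to\overline{\mathbb R}$ couplings, and $K:\mathbb X\times\mathbb Y\to\overline{\mathbb R}$, $f:\mathbb X\to\overline{\mathbb R}$, $g:\mathbb Y\to\overline{\mathbb R}$. For $(x^\sharp,y)\in\mathbb X^\sharp\times\mathbb Y$ define $$K_{x^\sharp}(y)=-\big(K(\cdot,y)\big)^{c}(x^\sharp)=\inf_{x\in\mathbb X}\big((-c(x,x^\sharp))\mathbin{\overset{\cdot}{+}} K(x,y)\big).$$ Suppose that for every $x^\sharp\in\mathbb X^\sharp$, $$\sup_{y\in\mathbb Y}\big((-K_{x^\sharp}(y))\mathbin{\underset{\cdot}{+}}(-g(y))\big)=\inf_{y^\sharp\in\mathbb Y^\sharp}\big(K_{x^\sharp}^{d}(y^\sharp)\mathbin{\overset{\cdot}{+}} g^{-d}(y^\sharp)\big).$$ Then: if $f(x)=\inf_{y\in\mathbb Y}\big(K(x,y)\mathbin{\overset{\cdot}{+}} g(y)\big)$ for all $x\in\mathbb X$, it follows that $f^{c}(x^\sharp)=\inf_{y^\sharp\in\mathbb Y^\sharp}\big(K^{c\mathbin{\underset{\cdot}{+}} d}(x^\sharp,y^\sharp)\mathbin{\overset{\cdot}{+}} g^{-d}(y^\sharp)\big)$ for all $x^\sharp\in\mathbb X^\sharp$.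
   Context: $\overline{\mathbb R}=[-\infty,+\infty]$. The Moreau lower addition $\mathbin{\underset{\cdot}{+}}$ is usual addition extended by $(+\infty)\mathbin{\underset{\cdot}{+}}(-\infty)=(-\infty)\mathbin{\underset{\cdot}{+}}(+\infty)=-\infty$; the Moreau upper addition $\mathbin{\overset{\cdot}{+}}$ is usual addition extended by $(+\infty)\mathbin{\overset{\cdot}{+}}(-\infty)=(-\infty)\mathbin{\overset{\cdot}{+}}(+\infty)=+\infty$. For $h:\mathbb X\to\overline{\mathbb R}$, $h^{c}(x^\sharp)=\sup_{x}\big(c(x,x^\sharp)\mathbin{\underset{\cdot}{+}}(-h(x))\big)$. For $k:\mathbb Y\to\overline{\mathbb R}$, $k^{d}(y^\sharp)=\sup_{y}\big(d(y,y^\sharp)\mathbin{\underset{\cdot}{+}}(-k(y))\big)$ and $k^{-d}(y^\sharp)=\sup_{y}\big((-d(y,y^\sharp))\mathbin{\underset{\cdot}{+}}(-k(y))\big)$. $K^{c\mathbin{\underset{\cdot}{+}} d}(x^\sharp,y^\sharp)=\sup_{x\in\mathbb X,y\in\mathbb Y}\big(c(x,x^\sharp)\mathbin{\underset{\cdot}{+}} d(y,y^\sharp)\mathbin{\underset{\cdot}{+}}(-K(x,y))\big)$. *)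

theory Defs
  imports "HOL-Library.Extended_Real"
begin

definition lplus :: "ereal \<Rightarrow> ereal \<Rightarrow> ereal" (infixl "+\<^sub>l" 65) where
  "a +\<^sub>l b = (if (a = \<infinity> \<and> b = -\<infinity>) \<or> (a = -\<infinity> \<and> b = \<infinity>) then -\<infinity> else a + b)"

definition uplus :: "ereal \<Rightarrow> ereal \<Rightarrow> ereal" (infixl "+\<^sub>u" 65) where
  "a +\<^sub>u b = (if (a = \<infinity> \<and> b = -\<infinity>) \<or> (a = -\<infinity> \<and> b = \<infinity>) then \<infinity> else a + b)"

definition cconj :: "('x \<Rightarrow> 'xs \<Rightarrow> ereal) \<Rightarrow> ('x \<Rightarrow> ereal) \<Rightarrow> 'xs \<Rightarrow> ereal" where
  "cconj c h xs = (SUP x. c x xs +\<^sub>l (- h x))"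

definition cdconj :: "('x \<Rightarrow> 'xs \<Rightarrow> ereal) \<Rightarrow> ('y \<Rightarrow> 'ys \<Rightarrow> ereal) \<Rightarrow> ('x \<Rightarrow> 'y \<Rightarrow> ereal)
    \<Rightarrow> 'xs \<Rightarrow> 'ys \<Rightarrow> ereal" where
  "cdconj c d K xs ys = (SUP p. c (fst p) xs +\<^sub>l d (snd p) ys +\<^sub>l (- K (fst p) (snd p)))"

end

theory Submission
  imports Defs
begin

text \<open>The c-conjugate of the inf-convolution f = inf_y (K(., y) +u g y) is
  sup_y (K(., y)^c +l (-g y)): negation turns the upper sum into a lower sum, and lower addition
  commutes with suprema, so the two suprema over x and y can be exchanged.  Exchanging them once
  more shows that the d-conjugate of -K(., y)^c(x#) is the joint conjugate K^(c +l d)(x#, .).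
  The duality hypothesis links the two expressions.\<close>

lemma lplus_commute: "a +\<^sub>l b = b +\<^sub>l a"
  unfolding lplus_def by (auto simp: add.commute)

lemma lplus_assoc: "a +\<^sub>l b +\<^sub>l c = a +\<^sub>l (b +\<^sub>l c)"
  unfolding lplus_def by (cases a; cases b; cases c) auto

lemma lplus_left_commute: "a +\<^sub>l (b +\<^sub>l c) = b +\<^sub>l (a +\<^sub>l c)"
  unfolding lplus_def by (cases a; cases b; cases c) auto

lemma uminus_uplus: "- (a +\<^sub>u b) = - a +\<^sub>l - b"
  unfolding lplus_def uplus_def by (cases a; cases b) auto

lemma lplus_SUP: "a +\<^sub>l (SUP i\<in>I. F i) = (SUP i\<in>I. a +\<^sub>l F i)"
proof (cases "I = {}")
  case True
  then show ?thesis by (cases a) (simp_all add: lplus_def bot_ereal_def)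
next
  case I: False
  show ?thesis
  proof (cases a)
    case (real r)
    then have "a +\<^sub>l (SUP i\<in>I. F i) = (SUP i\<in>I. F i) + a"
      by (simp add: lplus_def add.commute)
    also have "\<dots> = (SUP i\<in>I. F i + a)"
      using real I by (simp add: SUP_ereal_add_left)
    also have "\<dots> = (SUP i\<in>I. a +\<^sub>l F i)"
      using real by (simp add: lplus_def add.commute)
    finally show ?thesis .
  next
    case PInf
    show ?thesis
    proof (cases "\<forall>i\<in>I. F i = -\<infinity>")
      case True
      then show ?thesis using PInf I by (simp add: lplus_def)
    next
      case False
      then obtain i where "i \<in> I" "F i \<noteq> -\<infinity>" by blast
      then have "(SUP i\<in>I. F i) \<noteq> -\<infinity>"
        using SUP_upper[of i I F] by auto
      moreover have "(SUP i\<in>I. a +\<^sub>l F i) = \<infinity>"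
      proof -
        have "a +\<^sub>l F i = \<infinity>" using \<open>F i \<noteq> -\<infinity>\<close> PInf by (simp add: lplus_def)
        then show ?thesis using SUP_upper[of i I "\<lambda>i. a +\<^sub>l F i"] \<open>i \<in> I\<close> by simp
      qed
      ultimately show ?thesis using PInf by (simp add: lplus_def)
    qed
  next
    case MInf
    then have "a +\<^sub>l x = -\<infinity>" for x by (simp add: lplus_def)
    then show ?thesis using I by simp
  qed
qed

lemma SUP_lplus: "(SUP i\<in>I. F i) +\<^sub>l a = (SUP i\<in>I. F i +\<^sub>l a)"
  using lplus_SUP[of a F I] by (simp add: lplus_commute)

lemma cconj_INF_uplus:
  "cconj c (\<lambda>x. INF y. K x y +\<^sub>u g y) xs = (SUP y. cconj c (\<lambda>x. K x y) xs +\<^sub>l - g y)"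
proof -
  have "cconj c (\<lambda>x. INF y. K x y +\<^sub>u g y) xs = (SUP x. c x xs +\<^sub>l (SUP y. - K x y +\<^sub>l - g y))"
    unfolding cconj_def by (simp add: ereal_SUP_uminus_eq[symmetric] uminus_uplus)
  also have "\<dots> = (SUP x. SUP y. c x xs +\<^sub>l - K x y +\<^sub>l - g y)"
    by (simp add: lplus_SUP lplus_assoc)
  also have "\<dots> = (SUP y. SUP x. c x xs +\<^sub>l - K x y +\<^sub>l - g y)"
    by (rule SUP_commute)
  also have "\<dots> = (SUP y. cconj c (\<lambda>x. K x y) xs +\<^sub>l - g y)"
    by (simp add: cconj_def SUP_lplus)
  finally show ?thesis .
qed

lemma cconj_uminus_cconj:
  "cconj d (\<lambda>y. - cconj c (\<lambda>x. K x y) xs) ys = cdconj c d K xs ys"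
proof -
  have "cconj d (\<lambda>y. - cconj c (\<lambda>x. K x y) xs) ys
      = (SUP y. SUP x. d y ys +\<^sub>l (c x xs +\<^sub>l - K x y))"
    by (simp add: cconj_def lplus_SUP)
  also have "\<dots> = (SUP x. SUP y. c x xs +\<^sub>l d y ys +\<^sub>l - K x y)"
    by (subst SUP_commute) (simp add: lplus_left_commute lplus_assoc)
  also have "\<dots> = cdconj c d K xs ys"
    by (simp add: cdconj_def SUP_pair)
  finally show ?thesis .
qed

theorem corollary2:
  fixes c :: "'x \<Rightarrow> 'xs \<Rightarrow> ereal" and d :: "'y \<Rightarrow> 'ys \<Rightarrow> ereal"
    and K :: "'x \<Rightarrow> 'y \<Rightarrow> ereal" and f :: "'x \<Rightarrow> ereal" and g :: "'y \<Rightarrow> ereal"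
    and Kx :: "'xs \<Rightarrow> 'y \<Rightarrow> ereal"
  assumes Kx_def: "\<And>xs y. Kx xs y = - cconj c (\<lambda>x. K x y) xs"
    and dual: "\<And>xs. (SUP y. (- Kx xs y) +\<^sub>l (- g y))
              = (INF ys. cconj d (Kx xs) ys +\<^sub>u cconj (\<lambda>y ys. - d y ys) g ys)"
    and f_def: "\<And>x. f x = (INF y. K x y +\<^sub>u g y)"
  shows "\<And>xs. cconj c f xs = (INF ys. cdconj c d K xs ys +\<^sub>u cconj (\<lambda>y ys. - d y ys) g ys)"
proof -
  fix xs
  have "cconj c f xs = (SUP y. - Kx xs y +\<^sub>l - g y)"
    using cconj_INF_uplus[of c K g xs] by (simp add: Kx_def f_def[abs_def])
  also have "\<dots> = (INF ys. cconj d (Kx xs) ys +\<^sub>u cconj (\<lambda>y ys. - d y ys) g ys)"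
    by (rule dual)
  also have "\<dots> = (INF ys. cdconj c d K xs ys +\<^sub>u cconj (\<lambda>y ys. - d y ys) g ys)"
    by (simp add: Kx_def[abs_def] cconj_uminus_cconj)
  finally show "cconj c f xs = (INF ys. cdconj c d K xs ys +\<^sub>u cconj (\<lambda>y ys. - d y ys) g ys)" .
qed

end
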